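(* Let $\mathcal{N}=((V,A),\varphi)$ be a rooted $X$-cactus. Then $\mathcal{N}$ is temporal if and only if for every vertex $u\in V$ the following three properties hold: (a) if $u\in\varphi(X)$, then either $u$ is a leaf or $u$ is a parent of a reticulation vertex that is a leaf; (b) if $u$ has outdegree at least $2$, then $u$ is not the parent of a reticulation vertex that is a leaf; (c) if $u$ is the parent of a reticulation vertex $v$ in a reticulation cycle $\{P,P'\}$, then neither of the directed paths $P,P'$ consists of the single arc $(u,v)$.
   Context: Let $X$ be a finite non-empty set. A directed graph $N=(V,A)$ has a finite non-empty vertex set $V$ and arc set $A\subseteq V\times V$. It is a rooted DAG if it has no directed cycle and has a vertex $\rho$ of indegree $0$ (the root) such that every vertex is reachable from $\rho$ by a directed path. A leaf is a vertex of outdegree $0$, an internal vertex has outdegree $\ge 1$, a tree vertex has indegree $\le 1$, and a reticulation vertex has indegree $\ge 2$. If $(u,v)\in A$, then $v$ is a child of $u$ and $u$ is a parent of $v$. A reticulation cycle $\{P,P'\}$ consists of two distinct directed paths $P,P'$ with the same start vertex and the same end vertex but no other vertices in common. A rooted $X$-cactus $\mathcal{N}=(N,\varphi)$ is a rooted DAG $N=(V,A)$ together with a map $\varphi:X\to V$ such that (RC1) every vertex has indegree at most $2$; (RC2) no two distinct reticulation cycles have an arc in common; (RC3) $\varphi(X)$ contains all leaves and all tree vertices of outdegree $1$. A time-stamp function on $\mathcal{N}$ is a map $t:V\to\mathbb{R}_{\ge 0}$ with (TS1) $t(v)=0$ for all $v\in\varphi(X)$; (TS2) $t(u)>t(v)$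 for every arc $(u,v)$ such that $v$ is not a reticulation vertex; (TS3) $t(v)=t(p_1)=t(p_2)$ for every reticulation vertex $v$ with parents $p_1,p_2$. $\mathcal{N}$ is called temporal if a time-stamp function on its vertices exists. *)

theory Defs
  imports Complex_Main
begin

definition indeg :: "('v \<times> 'v) set \<Rightarrow> 'v \<Rightarrow> nat" where
  "indeg A v = card {u. (u, v) \<in> A}"

definition outdeg :: "('v \<times> 'v) set \<Rightarrow> 'v \<Rightarrow> nat" where
  "outdeg A v = card {w. (v, w) \<in> A}"

definition is_leaf :: "('v \<times> 'v) set \<Rightarrow> 'v \<Rightarrow> bool" where
  "is_leaf A v \<longleftrightarrow> outdeg A v = 0"

definition is_tree_vertex :: "('v \<times> 'v) set \<Rightarrow> 'v \<Rightarrow> bool" where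
  "is_tree_vertex A v \<longleftrightarrow> indeg A v \<le> 1"

definition is_reticulation :: "('v \<times> 'v) set \<Rightarrow> 'v \<Rightarrow> bool" where
  "is_reticulation A v \<longleftrightarrow> indeg A v \<ge> 2"

definition rooted_dag :: "'v set \<Rightarrow> ('v \<times> 'v) set \<Rightarrow> bool" where
  "rooted_dag V A \<longleftrightarrow> finite V \<and> V \<noteq> {} \<and> A \<subseteq> V \<times> V \<and> acyclic A \<and>
     (\<exists>\<rho>\<in>V. indeg A \<rho> = 0 \<and> (\<forall>v\<in>V. (\<rho>, v) \<in> A\<^sup>*))"

definition dpath :: "('v \<times> 'v) set \<Rightarrow> 'v list \<Rightarrow> bool" where
  "dpath A P \<longleftrightarrow> P \<noteq> [] \<and> distinct P \<and> successively (\<lambda>x y. (x, y) \<in> A) P"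

definition path_arcs :: "'v list \<Rightarrow> ('v \<times> 'v) set" where
  "path_arcs P = set (zip P (tl P))"

definition retic_cycle :: "('v \<times> 'v) set \<Rightarrow> 'v list \<Rightarrow> 'v list \<Rightarrow> bool" where
  "retic_cycle A P P' \<longleftrightarrow> dpath A P \<and> dpath A P' \<and> P \<noteq> P' \<and>
     hd P = hd P' \<and> last P = last P' \<and> set P \<inter> set P' = {hd P, last P}"

definition rooted_cactus :: "'x set \<Rightarrow> 'v set \<Rightarrow> ('v \<times> 'v) set \<Rightarrow> ('x \<Rightarrow> 'v) \<Rightarrow> bool" where
  "rooted_cactus X V A \<phi> \<longleftrightarrow> finite X \<and> X \<noteq> {} \<and> rooted_dag V A \<and> \<phi> ` X \<subseteq> V \<and>
     \<comment> \<open>(RC1)\<close> (\<forall>v\<in>V. indeg A v \<le> 2) \<and>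
     \<comment> \<open>(RC2)\<close> (\<forall>P1 P1' P2 P2'. retic_cycle A P1 P1' \<and> retic_cycle A P2 P2' \<and>
         {P1, P1'} \<noteq> {P2, P2'} \<longrightarrow>
         (path_arcs P1 \<union> path_arcs P1') \<inter> (path_arcs P2 \<union> path_arcs P2') = {}) \<and>
     \<comment> \<open>(RC3)\<close> (\<forall>v\<in>V. is_leaf A v \<or> (is_tree_vertex A v \<and> outdeg A v = 1) \<longrightarrow> v \<in> \<phi> ` X)"

definition time_stamp :: "'x set \<Rightarrow> 'v set \<Rightarrow> ('v \<times> 'v) set \<Rightarrow> ('x \<Rightarrow> 'v) \<Rightarrow> ('v \<Rightarrow> real) \<Rightarrow> bool" where
  "time_stamp X V A \<phi> t \<longleftrightarrow> (\<forall>v\<in>V. t v \<ge> 0) \<and>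
     \<comment> \<open>(TS1)\<close> (\<forall>v\<in>\<phi> ` X. t v = 0) \<and>
     \<comment> \<open>(TS2)\<close> (\<forall>(u, v)\<in>A. \<not> is_reticulation A v \<longrightarrow> t u > t v) \<and>
     \<comment> \<open>(TS3)\<close> (\<forall>v\<in>V. is_reticulation A v \<longrightarrow> (\<forall>p. (p, v) \<in> A \<longrightarrow> t p = t v))"

definition temporal :: "'x set \<Rightarrow> 'v set \<Rightarrow> ('v \<times> 'v) set \<Rightarrow> ('x \<Rightarrow> 'v) \<Rightarrow> bool" where
  "temporal X V A \<phi> \<longleftrightarrow> (\<exists>t. time_stamp X V A \<phi> t)"

end

theory Submission
  imports Defs
begin

(*
  Necessity. A time stamp vanishes on labelled vertices, is non-negative and strictly decreases
  along tree arcs, so all children of a labelled vertex are reticulations, and these must be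
  leaves. If a side of a reticulation cycle were a single arc (u, v), the other side would leave u
  through a tree arc (u, y) with t y < t u = t v, although v is reachable from y.

  Sufficiency. By (c) and (RC2), the parents of a reticulation are tree vertices and no vertex has
  two reticulation children. Weight the arcs: 0 for arcs into reticulations, 1 / (|P| - 2) for the
  other arcs of a side P of a reticulation cycle, and 1 for all remaining arcs. With height v the
  maximum weight of a directed path ending in v, every side rises by exactly 1 from its top vertex
  to the parent of its reticulation, so both parents of a reticulation have the same height. Hence
  M - height, reset to 0 on leaves and on parents of reticulation leaves, is a time stamp.
*)

lemma path_arcs_Nil [simp]: "path_arcs [] = {}"
  by (simp add: path_arcs_def)

lemma path_arcs_singleton [simp]: "path_arcs [a] = {}"
  by (simp add: path_arcs_def)

lemma path_arcs_Cons_Cons [simp]: "path_arcs (a # b # xs) = insert (a, b) (path_arcs (b # xs))"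
  by (simp add: path_arcs_def)

lemma path_arcs_snoc: "Q \<noteq> [] \<Longrightarrow> (last Q, y) \<in> path_arcs (Q @ [y])"
  by (induction Q rule: induct_list012) auto

lemma path_arcs_iff_nth:
  "(x, z) \<in> path_arcs P \<longleftrightarrow> (\<exists>i. Suc i < length P \<and> x = P ! i \<and> z = P ! Suc i)"
proof
  assume "(x, z) \<in> path_arcs P"
  then show "\<exists>i. Suc i < length P \<and> x = P ! i \<and> z = P ! Suc i"
    by (auto simp: path_arcs_def set_zip nth_tl less_diff_conv)
next
  assume "\<exists>i. Suc i < length P \<and> x = P ! i \<and> z = P ! Suc i"
  then obtain i where "Suc i < length P" "x = P ! i" "z = P ! Suc i" by blast
  then show "(x, z) \<in> path_arcs P"
    unfolding path_arcs_def set_zip by (auto simp: nth_tl intro!: exI[of _ i])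
qed

lemma path_arcs_subset_set: "path_arcs P \<subseteq> set P \<times> set P"
  by (induction P rule: induct_list012) auto

lemma path_arcs_into_last:
  assumes "2 \<le> length Q"
  shows "(Q ! (length Q - 2), last Q) \<in> path_arcs (Q @ ys)"
proof -
  have "Suc (length Q - 2) = length Q - 1" "Q \<noteq> []"
    using assms by auto
  then show ?thesis
    unfolding path_arcs_iff_nth by (intro exI[of _ "length Q - 2"]) (simp add: nth_append last_conv_nth)
qed

lemma set_subset_last_path_arcs: "set P \<subseteq> insert (last P) (fst ` path_arcs P)"
proof (induction P rule: induct_list012)
  case (3 a b xs)
  have "set (a # b # xs) = insert a (set (b # xs))" by simp
  also have "\<dots> \<subseteq> insert a (insert (last (b # xs)) (fst ` path_arcs (b # xs)))"
    using 3(2) by blast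
  finally show ?case by auto
qed simp_all

lemma dpath_path_arcs_subset: "dpath A P \<Longrightarrow> path_arcs P \<subseteq> A"
  unfolding dpath_def by (induction P rule: induct_list012) auto

lemma path_arcs_snd_neq_hd: "distinct P \<Longrightarrow> (x, z) \<in> path_arcs P \<Longrightarrow> z \<noteq> hd P"
  by (cases P) (auto simp: path_arcs_iff_nth nth_eq_iff_index_eq)

lemma path_arcs_length_ge_3:
  assumes "(x, z) \<in> path_arcs P" and "z \<noteq> last P"
  shows "3 \<le> length P"
proof -
  obtain i where i: "Suc i < length P" "z = P ! Suc i"
    using assms(1) by (auto simp: path_arcs_iff_nth)
  then have "P \<noteq> []" by auto
  with i assms(2) have "Suc i \<noteq> length P - 1"
    by (auto simp: last_conv_nth)
  with i show ?thesis by linarith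
qed

lemma successively_hd_rtrancl:
  "successively (\<lambda>x y. (x, y) \<in> A) Q \<Longrightarrow> z \<in> set Q \<Longrightarrow> (hd Q, z) \<in> A\<^sup>*"
  by (induction Q rule: induct_list012) (auto intro: converse_rtrancl_into_rtrancl)

lemma successively_rtrancl_last:
  "successively (\<lambda>x y. (x, y) \<in> A) Q \<Longrightarrow> z \<in> set Q \<Longrightarrow> (z, last Q) \<in> A\<^sup>*"
  by (induction Q arbitrary: z rule: induct_list012) (auto intro: converse_rtrancl_into_rtrancl)

lemma dpath_snoc_acyclic:
  assumes "acyclic A" "dpath A Q" "(last Q, y) \<in> A"
  shows "dpath A (Q @ [y])"
proof -
  have "y \<notin> set Q"
  proof
    assume "y \<in> set Q"
    then have "(y, last Q) \<in> A\<^sup>*"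
      using assms(2) successively_rtrancl_last by (auto simp: dpath_def)
    with assms(1,3) show False
      by (meson acyclic_def rtrancl_into_trancl1)
  qed
  with assms(2,3) show ?thesis
    by (auto simp: dpath_def successively_append_iff)
qed

lemma rtrancl_imp_dpath_acyclic:
  assumes "acyclic A" "(a, b) \<in> A\<^sup>*"
  shows "\<exists>Q. dpath A Q \<and> hd Q = a \<and> last Q = b"
  using assms(2)
proof (induction rule: rtrancl_induct)
  case base
  show ?case by (rule exI[of _ "[a]"]) (simp add: dpath_def)
next
  case (step b c)
  then obtain Q where "dpath A Q" "hd Q = a" "last Q = b" by blast
  with step(2) dpath_snoc_acyclic[OF assms(1)] show ?case
    by (metis dpath_def hd_append last_snoc)
qed

lemma retic_cycle_path_arcs_subset: "retic_cycle A P P' \<Longrightarrow> path_arcs P \<subseteq> A"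
  unfolding retic_cycle_def using dpath_path_arcs_subset by blast

lemma retic_cycle_sym: "retic_cycle A P P' \<Longrightarrow> retic_cycle A P' P"
  unfolding retic_cycle_def by (metis Int_commute)

lemma reticulation_other_parent:
  assumes "is_reticulation A v" "(p, v) \<in> A"
  obtains p' where "p' \<noteq> p" "(p', v) \<in> A"
proof -
  have "\<not> {u. (u, v) \<in> A} \<subseteq> {p}"
    using assms(1) card_mono[of "{p}" "{u. (u, v) \<in> A}"]
    by (auto simp: is_reticulation_def indeg_def)
  with that show ?thesis by blast
qed

lemma finite_parents: "finite A \<Longrightarrow> finite {u. (u, v) \<in> A}"
  by (rule finite_subset[of _ "fst ` A"]) force+

lemma finite_children: "finite A \<Longrightarrow> finite {w. (u, w) \<in> A}"
  by (rule finite_subset[of _ "snd ` A"]) force+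

lemma tree_vertex_parent_unique:
  assumes "finite A" "\<not> is_reticulation A y" "(x, y) \<in> A" "(x', y) \<in> A"
  shows "x = x'"
  using assms card_le_Suc0_iff_eq[OF finite_parents[OF assms(1), of y]]
  by (auto simp: is_reticulation_def indeg_def)

lemma is_leaf_iff: "finite A \<Longrightarrow> is_leaf A u \<longleftrightarrow> (\<forall>w. (u, w) \<notin> A)"
  by (simp add: is_leaf_def outdeg_def finite_children)

lemma two_children_outdeg:
  assumes "finite A" "(x, y) \<in> A" "(x, w) \<in> A" "y \<noteq> w"
  shows "2 \<le> outdeg A x"
proof -
  have "card {y, w} \<le> outdeg A x"
    unfolding outdeg_def using assms by (intro card_mono finite_children) auto
  with assms(4) show ?thesis by simp
qed

lemma outdeg_ge_2_other_child:
  assumes "2 \<le> outdeg A x"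
  obtains w where "w \<noteq> y" "(x, w) \<in> A"
proof -
  have "\<not> {w. (x, w) \<in> A} \<subseteq> {y}"
    using assms card_mono[of "{y}" "{w. (x, w) \<in> A}"] by (auto simp: outdeg_def)
  with that show ?thesis by blast
qed

lemma reticulation_cycle_through_parents:
  assumes dag: "rooted_dag V A" and p1: "(p1, v) \<in> A" and p2: "(p2, v) \<in> A" and "p1 \<noteq> p2"
  obtains Q1 Q2 where "retic_cycle A (Q1 @ [v]) (Q2 @ [v])" "Q1 \<noteq> []" "Q2 \<noteq> []"
    "last Q1 = p1" "last Q2 = p2"
proof -
  have fin: "finite A" and acyc: "acyclic A"
    using dag finite_subset[of A "V \<times> V"] by (auto simp: rooted_dag_def)
  define C where "C = {s. (s, p1) \<in> A\<^sup>* \<and> (s, p2) \<in> A\<^sup>*}"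
  obtain \<rho> where "\<rho> \<in> C"
    using dag p1 p2 by (auto simp: rooted_dag_def C_def)
  moreover have "wf ((A\<inverse>)\<^sup>+)"
    by (intro wf_trancl finite_acyclic_wf_converse fin acyc)
  ultimately obtain s where s: "s \<in> C" and "\<And>y. (y, s) \<in> (A\<inverse>)\<^sup>+ \<Longrightarrow> y \<notin> C"
    using wf_eq_minimal[THEN iffD1, rule_format, of "(A\<inverse>)\<^sup>+" \<rho> C] by blast
  then have lowest: "\<And>y. (s, y) \<in> A\<^sup>+ \<Longrightarrow> y \<notin> C"
    by (simp add: trancl_converse)
  obtain Q1 where Q1: "dpath A Q1" "hd Q1 = s" "last Q1 = p1"
    using rtrancl_imp_dpath_acyclic[OF acyc] s by (auto simp: C_def)
  obtain Q2 where Q2: "dpath A Q2" "hd Q2 = s" "last Q2 = p2"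
    using rtrancl_imp_dpath_acyclic[OF acyc] s by (auto simp: C_def)
  have ne: "Q1 \<noteq> []" "Q2 \<noteq> []"
    using Q1 Q2 by (auto simp: dpath_def)
  have "set Q1 \<inter> set Q2 \<subseteq> {s}"
  proof
    fix z assume "z \<in> set Q1 \<inter> set Q2"
    then have "(s, z) \<in> A\<^sup>*" "z \<in> C"
      using Q1 Q2 successively_hd_rtrancl[of A Q1 z] successively_rtrancl_last[of A Q1 z]
      successively_rtrancl_last[of A Q2 z] by (auto simp: dpath_def C_def)
    then show "z \<in> {s}"
      using lowest by (auto simp: rtrancl_eq_or_trancl)
  qed
  moreover have "s \<in> set Q1" "s \<in> set Q2"
    using hd_in_set[OF ne(1)] hd_in_set[OF ne(2)] Q1(2) Q2(2) by simp_all
  moreover have "dpath A (Q1 @ [v])" "dpath A (Q2 @ [v])"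
    using dpath_snoc_acyclic[OF acyc] Q1 Q2 p1 p2 by auto
  ultimately have "retic_cycle A (Q1 @ [v]) (Q2 @ [v])"
    using Q1 Q2 ne \<open>p1 \<noteq> p2\<close> by (auto simp: retic_cycle_def dpath_def)
  with that ne Q1 Q2 show ?thesis by blast
qed

definition path_weight :: "('v \<times> 'v \<Rightarrow> real) \<Rightarrow> 'v list \<Rightarrow> real" where
  "path_weight w Q = (\<Sum>e\<leftarrow>zip Q (tl Q). w e)"

definition max_path_weight :: "('v \<times> 'v) set \<Rightarrow> ('v \<times> 'v \<Rightarrow> real) \<Rightarrow> 'v \<Rightarrow> real" where
  "max_path_weight A w y = Max (path_weight w ` {Q. dpath A Q \<and> last Q = y})"

lemma path_weight_singleton [simp]: "path_weight w [x] = 0"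
  by (simp add: path_weight_def)

lemma path_weight_snoc: "Q \<noteq> [] \<Longrightarrow> path_weight w (Q @ [y]) = path_weight w Q + w (last Q, y)"
proof (induction Q rule: induct_list012)
  case (3 a b xs)
  then show ?case by (simp add: path_weight_def)
qed (simp_all add: path_weight_def)

lemma finite_dpaths_to:
  assumes "finite A"
  shows "finite {Q. dpath A Q \<and> last Q = y}"
proof (rule finite_subset)
  show "{Q. dpath A Q \<and> last Q = y} \<subseteq> {Q. set Q \<subseteq> insert y (fst ` A) \<and> distinct Q}"
  proof clarify
    fix Q assume "dpath A Q" "y = last Q"
    then show "set Q \<subseteq> insert (last Q) (fst ` A) \<and> distinct Q"
      using set_subset_last_path_arcs[of Q] dpath_path_arcs_subset[of A Q]
      by (auto simp: dpath_def)
  qed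
  show "finite {Q. set Q \<subseteq> insert y (fst ` A) \<and> distinct Q}"
    using assms by (simp add: finite_subset_distinct)
qed

lemma path_weight_le_max_path_weight:
  assumes "finite A" "dpath A Q"
  shows "path_weight w Q \<le> max_path_weight A w (last Q)"
  unfolding max_path_weight_def
  by (rule Max_ge) (use assms finite_dpaths_to[OF assms(1)] in auto)

lemma max_path_weight_attained:
  assumes "finite A"
  obtains Q where "dpath A Q" "last Q = y" "path_weight w Q = max_path_weight A w y"
proof -
  have "[y] \<in> {Q. dpath A Q \<and> last Q = y}"
    by (simp add: dpath_def)
  then have "max_path_weight A w y \<in> path_weight w ` {Q. dpath A Q \<and> last Q = y}"
    unfolding max_path_weight_def using finite_dpaths_to[OF assms] by (intro Max_in) auto
  with that show ?thesis by auto
qed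

lemma max_path_weight_nonneg:
  assumes "finite A"
  shows "0 \<le> max_path_weight A w y"
proof -
  have "dpath A [y]" by (simp add: dpath_def)
  from path_weight_le_max_path_weight[OF assms this, of w] show ?thesis by simp
qed

lemma max_path_weight_arc:
  assumes "finite A" "acyclic A" "(x, y) \<in> A"
  shows "max_path_weight A w x + w (x, y) \<le> max_path_weight A w y"
proof -
  obtain Q where Q: "dpath A Q" "last Q = x" "path_weight w Q = max_path_weight A w x"
    using max_path_weight_attained[OF assms(1)] .
  then have "dpath A (Q @ [y])"
    using dpath_snoc_acyclic[OF assms(2)] assms(3) by simp
  from path_weight_le_max_path_weight[OF assms(1) this, of w] Q show ?thesis
    by (simp add: path_weight_snoc dpath_def)
qed

lemma max_path_weight_via_parent:
  assumes "finite A" "\<And>e. 0 \<le> w e" "(x, y) \<in> A"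
  obtains x' where "(x', y) \<in> A" "max_path_weight A w y \<le> max_path_weight A w x' + w (x', y)"
proof -
  obtain Q where Q: "dpath A Q" "last Q = y" "path_weight w Q = max_path_weight A w y"
    using max_path_weight_attained[OF assms(1)] .
  define Q0 where "Q0 = butlast Q"
  have QQ: "Q = Q0 @ [y]"
    using Q append_butlast_last_id[of Q] unfolding Q0_def by (simp add: dpath_def)
  show ?thesis
  proof (cases "Q0 = []")
    case True
    with Q QQ have "max_path_weight A w y = 0" by simp
    with that[OF assms(3)] show ?thesis
      using max_path_weight_nonneg[OF assms(1), of w x] assms(2)[of "(x, y)"] by simp
  next
    case False
    with Q(1) QQ have "dpath A Q0" "(last Q0, y) \<in> A"
      by (auto simp: dpath_def successively_append_iff)
    moreover have "max_path_weight A w y = path_weight w Q0 + w (last Q0, y)"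
      using Q(3) QQ path_weight_snoc[OF False] by simp
    ultimately show ?thesis
      using that path_weight_le_max_path_weight[OF assms(1), of Q0 w] by fastforce
  qed
qed

text \<open>Condition (c) of the theorem; the other side is covered since reticulation cycles are symmetric.\<close>

definition no_arc_side :: "('v \<times> 'v) set \<Rightarrow> bool" where
  "no_arc_side A \<longleftrightarrow>
     (\<forall>u v P P'. (u, v) \<in> A \<longrightarrow> is_reticulation A v \<longrightarrow> retic_cycle A P P' \<longrightarrow> P \<noteq> [u, v])"

definition retic_leaf_parent :: "('v \<times> 'v) set \<Rightarrow> 'v \<Rightarrow> bool" where
  "retic_leaf_parent A u \<longleftrightarrow> (\<exists>v. (u, v) \<in> A \<and> is_reticulation A v \<and> is_leaf A v)"

lemma time_stampI:
  assumes "\<And>v. v \<in> V \<Longrightarrow> 0 \<le> t v" "\<And>v. v \<in> \<phi> ` X \<Longrightarrow> t v = 0"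
    "\<And>u v. (u, v) \<in> A \<Longrightarrow> \<not> is_reticulation A v \<Longrightarrow> t v < t u"
    "\<And>p v. (p, v) \<in> A \<Longrightarrow> is_reticulation A v \<Longrightarrow> t p = t v"
  shows "time_stamp X V A \<phi> t"
  using assms by (auto simp: time_stamp_def)

locale cactus =
  fixes X :: "'x set" and V :: "'v set" and A :: "('v \<times> 'v) set" and \<phi> :: "'x \<Rightarrow> 'v"
  assumes rooted_cactus: "rooted_cactus X V A \<phi>"
begin

lemma rooted_dag: "rooted_dag V A"
  using rooted_cactus by (simp add: rooted_cactus_def)

lemma arcs_in_V: "A \<subseteq> V \<times> V" and acyclic: "acyclic A"
  using rooted_dag by (simp_all add: rooted_dag_def)

lemma finite_V: "finite V"
  using rooted_dag by (simp add: rooted_dag_def)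

lemma finite_A: "finite A"
  using rooted_dag finite_subset[OF arcs_in_V] by (simp add: rooted_dag_def)

lemma arc_irrefl: "(x, y) \<in> A \<Longrightarrow> x \<noteq> y"
  using acyclic by (auto simp: acyclic_def)

lemma labels_in_V: "\<phi> ` X \<subseteq> V"
  using rooted_cactus by (simp add: rooted_cactus_def)

lemma leaf_labelled: "v \<in> V \<Longrightarrow> is_leaf A v \<Longrightarrow> v \<in> \<phi> ` X"
  using rooted_cactus unfolding rooted_cactus_def by blast

lemma cycles_sharing_arc_eq:
  assumes "retic_cycle A P1 P1'" "retic_cycle A P2 P2'"
    "e \<in> path_arcs P1 \<union> path_arcs P1'" "e \<in> path_arcs P2 \<union> path_arcs P2'"
  shows "{P1, P1'} = {P2, P2'}"
  using rooted_cactus assms unfolding rooted_cactus_def by blast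

lemma retic_cycle_inner_not_reticulation:
  assumes cyc: "retic_cycle A P P'" and xy: "(x, y) \<in> path_arcs P" and "y \<noteq> last P"
  shows "\<not> is_reticulation A y"
proof
  \<comment> \<open>A reticulation y ends a reticulation cycle through the arc (x, y), which by (RC2) is {P, P'}.\<close>
  assume "is_reticulation A y"
  moreover have "(x, y) \<in> A"
    using retic_cycle_path_arcs_subset[OF cyc] xy by blast
  ultimately obtain x' where "x' \<noteq> x" "(x', y) \<in> A"
    by (rule reticulation_other_parent)
  then obtain Q1 Q2 where c: "retic_cycle A (Q1 @ [y]) (Q2 @ [y])" "Q1 \<noteq> []" "last Q1 = x"
    using reticulation_cycle_through_parents[OF rooted_dag \<open>(x, y) \<in> A\<close>] by metis
  then have "(x, y) \<in> path_arcs (Q1 @ [y])"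
    using path_arcs_snoc by metis
  then have "{P, P'} = {Q1 @ [y], Q2 @ [y]}"
    using cycles_sharing_arc_eq[OF cyc c(1)] xy by blast
  then have "last P = y"
    by (auto simp: doubleton_eq_iff)
  with \<open>y \<noteq> last P\<close> show False by simp
qed

definition side_inner_arc :: "'v list \<Rightarrow> 'v \<times> 'v \<Rightarrow> bool" where
  "side_inner_arc P e \<longleftrightarrow> (\<exists>P'. retic_cycle A P P') \<and> e \<in> path_arcs P \<and> snd e \<noteq> last P"

lemma side_inner_arc_unique:
  assumes "side_inner_arc P (x, z)" "side_inner_arc Q (x, z)"
  shows "Q = P"
proof (rule ccontr)
  assume "Q \<noteq> P"
  obtain P' Q' where P: "retic_cycle A P P'" and Q: "retic_cycle A Q Q'"
    using assms by (auto simp: side_inner_arc_def)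
  with assms \<open>Q \<noteq> P\<close> have "Q = P'"
    using cycles_sharing_arc_eq[OF P Q, of "(x, z)"] by (auto simp: side_inner_arc_def doubleton_eq_iff)
  with assms have "z \<in> set P \<inter> set P'"
    using path_arcs_subset_set unfolding side_inner_arc_def by blast
  with P have "z \<in> {hd P, last P}"
    by (simp add: retic_cycle_def)
  moreover have "z \<noteq> hd P"
    using P assms(1) path_arcs_snd_neq_hd[of P x z]
    by (simp add: side_inner_arc_def retic_cycle_def dpath_def)
  ultimately show False
    using assms(1) by (simp add: side_inner_arc_def)
qed

text \<open>A side P has exactly length P - 2 inner arcs, so these weigh 1 in total.\<close>

definition arc_weight :: "'v \<times> 'v \<Rightarrow> real" where
  "arc_weight e =
     (if is_reticulation A (snd e) then 0
      else if \<exists>P. side_inner_arc P e then 1 / real (length (THE P. side_inner_arc P e) - 2)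
      else 1)"

lemma arc_weight_side_inner_arc:
  assumes "side_inner_arc P e"
  shows "arc_weight e = 1 / real (length P - 2)"
proof -
  obtain x z where e: "e = (x, z)" by fastforce
  have "\<not> is_reticulation A (snd e)"
    using assms retic_cycle_inner_not_reticulation unfolding side_inner_arc_def e by auto
  moreover have "(THE P. side_inner_arc P e) = P"
    using assms side_inner_arc_unique unfolding e by blast
  ultimately show ?thesis
    using assms by (auto simp: arc_weight_def)
qed

lemma arc_weight_pos: "\<not> is_reticulation A (snd e) \<Longrightarrow> 0 < arc_weight e"
proof (cases "\<exists>P. side_inner_arc P e")
  case True
  then obtain P where P: "side_inner_arc P e" ..
  then have "3 \<le> length P"
    using path_arcs_length_ge_3[of "fst e" "snd e" P] by (simp add: side_inner_arc_def)
  with P show ?thesis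
    by (simp add: arc_weight_side_inner_arc)
qed (simp add: arc_weight_def)

lemma arc_weight_nonneg: "0 \<le> arc_weight e"
  using arc_weight_pos[of e] by (cases "is_reticulation A (snd e)") (auto simp: arc_weight_def)

definition height :: "'v \<Rightarrow> real" where
  "height = max_path_weight A arc_weight"

lemma height_tree_arc:
  assumes "(x, z) \<in> A" "\<not> is_reticulation A z"
  shows "height z = height x + arc_weight (x, z)"
proof -
  obtain x' where x': "(x', z) \<in> A"
    "max_path_weight A arc_weight z \<le> max_path_weight A arc_weight x' + arc_weight (x', z)"
    by (rule max_path_weight_via_parent[OF finite_A arc_weight_nonneg assms(1)])
  have "x' = x"
    by (rule tree_vertex_parent_unique[OF finite_A assms(2) x'(1) assms(1)])
  with x'(2) show ?thesis
    using max_path_weight_arc[OF finite_A acyclic assms(1), of arc_weight]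
    unfolding height_def by simp
qed

lemma height_reticulation:
  assumes "(p, v) \<in> A" "is_reticulation A v" "\<And>p'. (p', v) \<in> A \<Longrightarrow> height p' = height p"
  shows "height v = height p"
proof -
  obtain p' where p': "(p', v) \<in> A"
    "max_path_weight A arc_weight v \<le> max_path_weight A arc_weight p' + arc_weight (p', v)"
    by (rule max_path_weight_via_parent[OF finite_A arc_weight_nonneg assms(1)])
  have "arc_weight (p', v) = 0" "arc_weight (p, v) = 0"
    using assms(2) by (simp_all add: arc_weight_def)
  with p' assms(3)[OF p'(1)] show ?thesis
    using max_path_weight_arc[OF finite_A acyclic assms(1), of arc_weight]
    unfolding height_def by simp
qed

lemma height_along_side:
  assumes cyc: "retic_cycle A P P'"
  shows "i \<le> length P - 2 \<Longrightarrow> height (P ! i) = height (hd P) + i / (length P - 2)"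
proof (induction i)
  case 0
  have "P \<noteq> []"
    using cyc by (simp add: retic_cycle_def dpath_def)
  then show ?case
    by (simp add: hd_conv_nth)
next
  case (Suc i)
  have arc: "(P ! i, P ! Suc i) \<in> path_arcs P"
    unfolding path_arcs_iff_nth using Suc.prems by (intro exI[of _ i]) auto
  have "distinct P" "P \<noteq> []"
    using cyc by (simp_all add: retic_cycle_def dpath_def)
  with Suc.prems have "P ! Suc i \<noteq> last P"
    by (simp add: last_conv_nth nth_eq_iff_index_eq)
  with cyc arc have side: "side_inner_arc P (P ! i, P ! Suc i)"
    by (auto simp: side_inner_arc_def)
  have "(P ! i, P ! Suc i) \<in> A"
    using retic_cycle_path_arcs_subset[OF cyc] arc by blast
  then have "height (P ! Suc i) = height (P ! i) + 1 / (length P - 2)"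
    using height_tree_arc retic_cycle_inner_not_reticulation[OF cyc arc] \<open>P ! Suc i \<noteq> last P\<close>
      arc_weight_side_inner_arc[OF side] by simp
  with Suc show ?case
    by (simp add: add_divide_distrib)
qed

lemma height_parent_of_cycle_end:
  assumes "retic_cycle A (Q @ [v]) P'" "2 \<le> length Q"
  shows "height (last Q) = height (hd Q) + 1"
proof -
  have "height ((Q @ [v]) ! (length Q - 1)) = height (hd (Q @ [v])) + 1"
    using height_along_side[OF assms(1), of "length Q - 1"] assms(2) by simp
  moreover have "Q \<noteq> []"
    using assms(2) by auto
  ultimately show ?thesis
    by (simp add: nth_append last_conv_nth hd_append2)
qed

lemma no_arc_side_long_side:
  assumes "no_arc_side A" "retic_cycle A (Q @ [v]) P'" "is_reticulation A v" "Q \<noteq> []"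
  shows "2 \<le> length Q"
proof (rule ccontr)
  assume "\<not> 2 \<le> length Q"
  with assms(4) have eq: "Q @ [v] = [last Q, v]"
    by (cases Q) (auto simp: Suc_le_eq)
  have "dpath A [last Q, v]"
    using assms(2) unfolding eq[symmetric] retic_cycle_def by blast
  then have "(last Q, v) \<in> A"
    by (simp add: dpath_def)
  with eq assms(1-3) show False
    unfolding no_arc_side_def by metis
qed

lemma no_arc_side_penultimate_arc:
  assumes "no_arc_side A" "is_reticulation A v" "(p, v) \<in> A"
  obtains Q P' q where "retic_cycle A (Q @ [v]) P'" "last Q = p" "2 \<le> length Q"
    "(q, p) \<in> path_arcs (Q @ [v])"
proof -
  obtain p' where "p' \<noteq> p" "(p', v) \<in> A"
    using reticulation_other_parent[OF assms(2,3)] .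
  then obtain Q Q' where c: "retic_cycle A (Q @ [v]) (Q' @ [v])" "Q \<noteq> []" "last Q = p"
    using reticulation_cycle_through_parents[OF rooted_dag assms(3)] by metis
  moreover have len: "2 \<le> length Q"
    using no_arc_side_long_side[OF assms(1) c(1) assms(2) c(2)] .
  ultimately show ?thesis
    using that path_arcs_into_last[OF len, of "[v]"] by simp
qed

lemma no_arc_side_parent_not_reticulation:
  assumes "no_arc_side A" "is_reticulation A v" "(p, v) \<in> A"
  shows "\<not> is_reticulation A p"
proof -
  obtain Q P' q where c: "retic_cycle A (Q @ [v]) P'" "last Q = p" "2 \<le> length Q"
    "(q, p) \<in> path_arcs (Q @ [v])"
    by (rule no_arc_side_penultimate_arc[OF assms])
  have "p \<noteq> last (Q @ [v])"
    using arc_irrefl[OF assms(3)] by simp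
  then show ?thesis
    by (rule retic_cycle_inner_not_reticulation[OF c(1) c(4)])
qed

lemma no_arc_side_reticulation_child_unique:
  assumes c: "no_arc_side A" and rv: "is_reticulation A v" and rw: "is_reticulation A w"
    and xv: "(x, v) \<in> A" and xw: "(x, w) \<in> A"
  shows "v = w"
proof -
  obtain Q P' q where Q: "retic_cycle A (Q @ [v]) P'" "last Q = x" "2 \<le> length Q"
    "(q, x) \<in> path_arcs (Q @ [v])"
    by (rule no_arc_side_penultimate_arc[OF c rv xv])
  obtain R R' r where R: "retic_cycle A (R @ [w]) R'" "last R = x" "2 \<le> length R"
    "(r, x) \<in> path_arcs (R @ [w])"
    by (rule no_arc_side_penultimate_arc[OF c rw xw])
  have "(q, x) \<in> A" "(r, x) \<in> A"
    using retic_cycle_path_arcs_subset[OF Q(1)] retic_cycle_path_arcs_subset[OF R(1)] Q(4) R(4)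
    by auto
  then have "q = r"
    by (rule tree_vertex_parent_unique[OF finite_A no_arc_side_parent_not_reticulation[OF c rv xv]])
  then have "{Q @ [v], P'} = {R @ [w], R'}"
    using cycles_sharing_arc_eq[OF Q(1) R(1), of "(q, x)"] Q(4) R(4) by simp
  moreover have "last P' = v" "last R' = w"
    using Q(1) R(1) by (simp_all add: retic_cycle_def)
  ultimately show ?thesis
    by (auto simp: doubleton_eq_iff)
qed

lemma height_coparents:
  assumes c: "no_arc_side A" and "is_reticulation A v" "(p1, v) \<in> A" "(p2, v) \<in> A"
  shows "height p1 = height p2"
proof (cases "p1 = p2")
  case False
  obtain Q1 Q2 where cyc: "retic_cycle A (Q1 @ [v]) (Q2 @ [v])" "Q1 \<noteq> []" "Q2 \<noteq> []"
    "last Q1 = p1" "last Q2 = p2"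
    by (rule reticulation_cycle_through_parents[OF rooted_dag assms(3,4) False])
  have cyc': "retic_cycle A (Q2 @ [v]) (Q1 @ [v])"
    using retic_cycle_sym[OF cyc(1)] .
  have "height p1 = height (hd Q1) + 1"
    using height_parent_of_cycle_end[OF cyc(1)] no_arc_side_long_side[OF c cyc(1) assms(2) cyc(2)]
      cyc(4) by simp
  moreover have "height p2 = height (hd Q2) + 1"
    using height_parent_of_cycle_end[OF cyc'] no_arc_side_long_side[OF c cyc' assms(2) cyc(3)]
      cyc(5) by simp
  moreover have "hd Q1 = hd Q2"
    using cyc(1-3) by (simp add: retic_cycle_def hd_append2)
  ultimately show ?thesis by simp
qed simp

lemma time_stamp_label_zero: "time_stamp X V A \<phi> t \<Longrightarrow> v \<in> \<phi> ` X \<Longrightarrow> t v = 0"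
  unfolding time_stamp_def by blast

lemma time_stamp_tree_arc:
  "time_stamp X V A \<phi> t \<Longrightarrow> (u, v) \<in> A \<Longrightarrow> \<not> is_reticulation A v \<Longrightarrow> t v < t u"
  unfolding time_stamp_def by blast

lemma time_stamp_reticulation_arc:
  "time_stamp X V A \<phi> t \<Longrightarrow> (p, v) \<in> A \<Longrightarrow> is_reticulation A v \<Longrightarrow> t p = t v"
  using arcs_in_V unfolding time_stamp_def by blast

lemma time_stamp_rtrancl_antimono:
  assumes ts: "time_stamp X V A \<phi> t" and "(a, b) \<in> A\<^sup>*"
  shows "t b \<le> t a"
  using assms(2)
proof (induction rule: rtrancl_induct)
  case (step b c)
  then show ?case
    using time_stamp_tree_arc[OF ts step(2)] time_stamp_reticulation_arc[OF ts step(2)]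
    by (cases "is_reticulation A c") auto
qed simp

lemma time_stamp_zero_child:
  assumes ts: "time_stamp X V A \<phi> t" and "t u = 0" "(u, w) \<in> A"
  shows "is_reticulation A w" "t w = 0"
proof -
  have "0 \<le> t w"
    using ts assms(3) arcs_in_V by (auto simp: time_stamp_def)
  then show "is_reticulation A w"
    using time_stamp_tree_arc[OF ts assms(3)] assms(2) by fastforce
  then show "t w = 0"
    using time_stamp_reticulation_arc[OF ts assms(3)] assms(2) by simp
qed

lemma time_stamp_no_arc_side:
  assumes ts: "time_stamp X V A \<phi> t"
  shows "no_arc_side A"
  unfolding no_arc_side_def
proof (intro allI impI notI)
  fix u v P P'
  assume uv: "(u, v) \<in> A" and r: "is_reticulation A v" and cyc: "retic_cycle A P P'"
    and "P = [u, v]"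
  with cyc have P': "hd P' = u" "last P' = v" "P' \<noteq> [u, v]" "distinct P'" "P' \<noteq> []"
    by (auto simp: retic_cycle_def dpath_def)
  obtain T where T: "P' = u # T"
    using P'(1,5) by (cases P') auto
  with P'(2) arc_irrefl[OF uv] obtain y T' where y: "P' = u # y # T'"
    by (cases T) auto
  have "y \<noteq> v"
  proof
    assume "y = v"
    with P'(3) y have "T' \<noteq> []" by auto
    with P'(2) y have "v \<in> set T'"
      using last_in_set by fastforce
    with P'(4) y \<open>y = v\<close> show False by simp
  qed
  have arc: "(u, y) \<in> path_arcs P'"
    using y by simp
  have "\<not> is_reticulation A y"
    using retic_cycle_inner_not_reticulation[OF retic_cycle_sym[OF cyc] arc] \<open>y \<noteq> v\<close> P'(2)
    by simp
  moreover have "(u, y) \<in> A"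
    using retic_cycle_path_arcs_subset[OF retic_cycle_sym[OF cyc]] arc by blast
  ultimately have "t y < t v"
    using time_stamp_tree_arc[OF ts] time_stamp_reticulation_arc[OF ts uv r] by metis
  moreover have "(y, v) \<in> A\<^sup>*"
    using cyc successively_rtrancl_last[of A P' y] P'(2) y by (simp add: retic_cycle_def dpath_def)
  ultimately show False
    using time_stamp_rtrancl_antimono[OF ts] by (simp add: not_le[symmetric])
qed

lemma time_stamp_labelled:
  assumes ts: "time_stamp X V A \<phi> t" and "u \<in> \<phi> ` X"
  shows "is_leaf A u \<or> retic_leaf_parent A u"
proof (cases "is_leaf A u")
  case False
  then obtain v where uv: "(u, v) \<in> A"
    using is_leaf_iff[OF finite_A] by blast
  have "t u = 0"
    using time_stamp_label_zero[OF ts assms(2)] .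
  then have rv: "is_reticulation A v" and "t v = 0"
    using time_stamp_zero_child[OF ts _ uv] by blast+
  have "is_leaf A v"
  proof (rule ccontr)
    assume "\<not> is_leaf A v"
    then obtain w where vw: "(v, w) \<in> A"
      using is_leaf_iff[OF finite_A] by blast
    then have "is_reticulation A w"
      using time_stamp_zero_child(1)[OF ts \<open>t v = 0\<close>] by blast
    with rv show False
      using no_arc_side_parent_not_reticulation[OF time_stamp_no_arc_side[OF ts] _ vw] by blast
  qed
  with uv rv show ?thesis
    by (auto simp: retic_leaf_parent_def)
qed simp

lemma time_stamp_branching:
  assumes ts: "time_stamp X V A \<phi> t" and "2 \<le> outdeg A u"
  shows "\<not> retic_leaf_parent A u"
proof
  assume "retic_leaf_parent A u"
  then obtain v where v: "(u, v) \<in> A" "is_reticulation A v" "is_leaf A v"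
    by (auto simp: retic_leaf_parent_def)
  then have "v \<in> \<phi> ` X"
    using leaf_labelled arcs_in_V by blast
  then have "t u = 0"
    using time_stamp_label_zero[OF ts] time_stamp_reticulation_arc[OF ts v(1,2)] by simp
  obtain w where w: "w \<noteq> v" "(u, w) \<in> A"
    using outdeg_ge_2_other_child[OF assms(2)] .
  have "is_reticulation A w"
    using time_stamp_zero_child(1)[OF ts \<open>t u = 0\<close> w(2)] .
  then have "v = w"
    using no_arc_side_reticulation_child_unique[OF time_stamp_no_arc_side[OF ts] v(2) _ v(1) w(2)]
    by blast
  with w(1) show False by simp
qed

lemma no_arc_side_reticulation_not_retic_leaf_parent:
  assumes "no_arc_side A" "is_reticulation A v"
  shows "\<not> retic_leaf_parent A v"
  using no_arc_side_parent_not_reticulation[OF assms(1)] assms(2)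
  unfolding retic_leaf_parent_def by blast

lemma no_arc_side_coparent_not_retic_leaf_parent:
  assumes "no_arc_side A" "is_reticulation A v" "\<not> is_leaf A v" "(p, v) \<in> A"
  shows "\<not> retic_leaf_parent A p"
  using no_arc_side_reticulation_child_unique[OF assms(1) _ assms(2) _ assms(4)] assms(3)
  unfolding retic_leaf_parent_def by blast

lemma tree_arc_tail_not_retic_leaf_parent:
  assumes branching: "\<And>u. u \<in> V \<Longrightarrow> 2 \<le> outdeg A u \<Longrightarrow> \<not> retic_leaf_parent A u"
    and xy: "(x, y) \<in> A" and "\<not> is_reticulation A y"
  shows "\<not> retic_leaf_parent A x"
proof
  assume "retic_leaf_parent A x"
  then obtain w where w: "(x, w) \<in> A" "is_reticulation A w"
    by (auto simp: retic_leaf_parent_def)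
  with assms(3) have "2 \<le> outdeg A x"
    using two_children_outdeg[OF finite_A xy w(1)] by blast
  moreover have "x \<in> V"
    using xy arcs_in_V by auto
  ultimately show False
    using branching \<open>retic_leaf_parent A x\<close> by blast
qed

lemma conditions_imp_temporal:
  assumes c: "no_arc_side A"
    and labelled: "\<And>u. u \<in> \<phi> ` X \<Longrightarrow> is_leaf A u \<or> retic_leaf_parent A u"
    and branching: "\<And>u. u \<in> V \<Longrightarrow> 2 \<le> outdeg A u \<Longrightarrow> \<not> retic_leaf_parent A u"
  shows "temporal X V A \<phi>"
proof -
  define Z where "Z = {x. is_leaf A x \<or> retic_leaf_parent A x}"
  define M where "M = Max (height ` V) + 1"
  define t where "t x = (if x \<in> Z then 0 else M - height x)" for x
  have M: "1 \<le> M - height x" if "x \<in> V" for x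
    using that finite_V by (simp add: M_def)
  have tail_not_Z: "x \<notin> Z" if "(x, y) \<in> A" "\<not> is_reticulation A y" for x y
    using tree_arc_tail_not_retic_leaf_parent[OF branching that] is_leaf_iff[OF finite_A] that(1)
    by (auto simp: Z_def)
  have "time_stamp X V A \<phi> t"
  proof (rule time_stampI)
    show "0 \<le> t v" if "v \<in> V" for v
      using M[OF that] by (simp add: t_def)
    show "t v = 0" if "v \<in> \<phi> ` X" for v
      using labelled[OF that] by (simp add: t_def Z_def)
    show "t y < t x" if "(x, y) \<in> A" "\<not> is_reticulation A y" for x y
    proof -
      have "height x < height y"
        using height_tree_arc[OF that] arc_weight_pos[of "(x, y)"] that(2) by simp
      moreover have "x \<in> V"
        using that(1) arcs_in_V by auto
      ultimately show ?thesis
        using tail_not_Z[OF that] M[of x] by (auto simp: t_def)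
    qed
    show "t p = t v" if pv: "(p, v) \<in> A" and rv: "is_reticulation A v" for p v
    proof (cases "is_leaf A v")
      case True
      with pv rv show ?thesis
        by (auto simp: t_def Z_def retic_leaf_parent_def)
    next
      case False
      then have "v \<notin> Z" "p \<notin> Z"
        using no_arc_side_reticulation_not_retic_leaf_parent[OF c rv]
          no_arc_side_coparent_not_retic_leaf_parent[OF c rv False pv]
          pv is_leaf_iff[OF finite_A] by (auto simp: Z_def)
      moreover have "height v = height p"
        using height_reticulation[OF pv rv] height_coparents[OF c rv] pv by blast
      ultimately show ?thesis
        by (simp add: t_def)
    qed
  qed
  then show ?thesis
    unfolding temporal_def by blast
qed

lemma temporal_iff:
  "temporal X V A \<phi> \<longleftrightarrow>
     (\<forall>u\<in>V. (u \<in> \<phi> ` X \<longrightarrow> is_leaf A u \<or> retic_leaf_parent A u) \<and>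
        (2 \<le> outdeg A u \<longrightarrow> \<not> retic_leaf_parent A u)) \<and> no_arc_side A"
proof
  assume "temporal X V A \<phi>"
  then obtain t where ts: "time_stamp X V A \<phi> t"
    by (auto simp: temporal_def)
  then show "(\<forall>u\<in>V. (u \<in> \<phi> ` X \<longrightarrow> is_leaf A u \<or> retic_leaf_parent A u) \<and>
      (2 \<le> outdeg A u \<longrightarrow> \<not> retic_leaf_parent A u)) \<and> no_arc_side A"
    using time_stamp_labelled[OF ts] time_stamp_branching[OF ts] time_stamp_no_arc_side[OF ts]
    by blast
next
  assume "(\<forall>u\<in>V. (u \<in> \<phi> ` X \<longrightarrow> is_leaf A u \<or> retic_leaf_parent A u) \<and>
      (2 \<le> outdeg A u \<longrightarrow> \<not> retic_leaf_parent A u)) \<and> no_arc_side A"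
  then show "temporal X V A \<phi>"
    using labels_in_V by (intro conditions_imp_temporal) auto
qed

end

theorem mainTheorem1:
  fixes X :: "'x set" and V :: "'v set" and A :: "('v \<times> 'v) set" and \<phi> :: "'x \<Rightarrow> 'v"
  assumes "rooted_cactus X V A \<phi>"
  shows "temporal X V A \<phi> \<longleftrightarrow>
    (\<forall>u\<in>V.
      \<comment> \<open>(a)\<close>
      (u \<in> \<phi> ` X \<longrightarrow>
         is_leaf A u \<or> (\<exists>v. (u, v) \<in> A \<and> is_reticulation A v \<and> is_leaf A v)) \<and>
      \<comment> \<open>(b)\<close>
      (outdeg A u \<ge> 2 \<longrightarrow>
         \<not> (\<exists>v. (u, v) \<in> A \<and> is_reticulation A v \<and> is_leaf A v)) \<and>
      \<comment> \<open>(c)\<close>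
      (\<forall>v P P'. (u, v) \<in> A \<and> is_reticulation A v \<and> retic_cycle A P P' \<and>
         v \<in> set P \<union> set P' \<longrightarrow> P \<noteq> [u, v] \<and> P' \<noteq> [u, v]))"
proof -
  interpret cactus X V A \<phi>
    using assms by unfold_locales
  have "no_arc_side A \<longleftrightarrow> (\<forall>u\<in>V. \<forall>v P P'. (u, v) \<in> A \<and> is_reticulation A v \<and>
      retic_cycle A P P' \<and> v \<in> set P \<union> set P' \<longrightarrow> P \<noteq> [u, v] \<and> P' \<noteq> [u, v])"
    using arcs_in_V retic_cycle_sym unfolding no_arc_side_def by fastforce
  then show ?thesis
    unfolding temporal_iff retic_leaf_parent_def[symmetric] by blast
qed

end
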